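(* Let $n\ge 3$ and let $X=\mathrm{C}_n$ be the cycle graph on $n$ vertices. Then $|\mathrm{Fix}(\mathbf{F}^\uparrow)|=2+\mathrm{Luc}_{3n}=2+(2+\sqrt5)^n+(2-\sqrt5)^n$, where $\mathrm{Luc}_m$ is the $m$-th Lucas number ($\mathrm{Luc}_0=2$, $\mathrm{Luc}_1=1$, $\mathrm{Luc}_m=\mathrm{Luc}_{m-1}+\mathrm{Luc}_{m-2}$).
   Context: For a finite simple graph $X$ with vertices $1,\dots,n$, $d(v)$ is the degree of $v$ and $n[v]$ the closed neighborhood of $v$. An extended vertex state is $s_v=(x_v,k_v)\in\{0,1\}\times\{1,\dots,d(v)+1\}$; $\mathcal{S}$ is the product of these sets. Let $\sigma(x[v])=|\{u\in n[v]:x_u=1\}|$. The increasing vertex function maps $(x_v,k_v)$ to $(x_v',k_v')$ with $x_v'=1$ iff $\sigma(x[v])\ge k_v$ (else $0$), and $k_v'=k_v+1$ if $x_v=0$ and $\sigma(x[v])\ge k_v$, else $k_v'=k_v$. $\mathbf{F}^\uparrow:\mathcal{S}\to\mathcal{S}$ applies this vertex function at all vertices simultaneously, and $\mathrm{Fix}(\mathbf{F}^\uparrow)$ is its set of fixed points (equivalently: states with, for every $v$, either $x_v=0$ and $\sigma(x[v])<k_v$, or $x_v=1$ and $\sigma(x[v])\ge k_v$). *)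

theory Defs
  imports Complex_Main "HOL-Library.FuncSet"
begin

text \<open>A finite simple graph is given by a vertex set V and a symmetric irreflexive
  adjacency relation E on V.\<close>

definition degree :: "('a \<Rightarrow> 'a \<Rightarrow> bool) \<Rightarrow> 'a set \<Rightarrow> 'a \<Rightarrow> nat" where
  "degree E V v = card {u \<in> V. E v u}"

definition closed_nbhd :: "('a \<Rightarrow> 'a \<Rightarrow> bool) \<Rightarrow> 'a set \<Rightarrow> 'a \<Rightarrow> 'a set" where
  "closed_nbhd E V v = {u \<in> V. u = v \<or> E v u}"

definition ext_states :: "('a \<Rightarrow> 'a \<Rightarrow> bool) \<Rightarrow> 'a set \<Rightarrow> ('a \<Rightarrow> nat \<times> nat) set" where
  "ext_states E V = (\<Pi>\<^sub>E v\<in>V. {0,1} \<times> {1..degree E V v + 1})"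

definition sigma :: "('a \<Rightarrow> 'a \<Rightarrow> bool) \<Rightarrow> 'a set \<Rightarrow> ('a \<Rightarrow> nat \<times> nat) \<Rightarrow> 'a \<Rightarrow> nat" where
  "sigma E V s v = card {u \<in> closed_nbhd E V v. fst (s u) = 1}"

definition incr_vertex_fun ::
  "('a \<Rightarrow> 'a \<Rightarrow> bool) \<Rightarrow> 'a set \<Rightarrow> ('a \<Rightarrow> nat \<times> nat) \<Rightarrow> 'a \<Rightarrow> nat \<times> nat" where
  "incr_vertex_fun E V s v =
     (let x = fst (s v); k = snd (s v); \<sigma> = sigma E V s v in
       (if \<sigma> \<ge> k then 1 else 0, if x = 0 \<and> \<sigma> \<ge> k then k + 1 else k))"

definition F_up :: "('a \<Rightarrow> 'a \<Rightarrow> bool) \<Rightarrow> 'a set \<Rightarrow> ('a \<Rightarrow> nat \<times> nat) \<Rightarrow> ('a \<Rightarrow> nat \<times> nat)" where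
  "F_up E V s = (\<lambda>v\<in>V. incr_vertex_fun E V s v)"

definition Fix_F_up :: "('a \<Rightarrow> 'a \<Rightarrow> bool) \<Rightarrow> 'a set \<Rightarrow> ('a \<Rightarrow> nat \<times> nat) set" where
  "Fix_F_up E V = {s \<in> ext_states E V. F_up E V s = s}"

definition cycle_adj :: "nat \<Rightarrow> nat \<Rightarrow> nat \<Rightarrow> bool" where
  "cycle_adj n u v = (u < n \<and> v < n \<and> (v = (u + 1) mod n \<or> u = (v + 1) mod n))"

fun lucas :: "nat \<Rightarrow> nat" where
  "lucas 0 = 2"
| "lucas (Suc 0) = 1"
| "lucas (Suc (Suc m)) = lucas (Suc m) + lucas m"

end

theory Submission
  imports Defs
begin

text \<open>A fixed point consists of a Boolean state \<open>x\<close> together with, at every vertex \<open>v\<close>, a threshold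
  \<open>k\<^sub>v \<in> {1..d(v) + 1}\<close> lying on the side of \<open>\<sigma>(x[v])\<close> prescribed by \<open>x\<^sub>v\<close>; hence \<open>|Fix(F\<^sup>\<up>)|\<close> is the
  sum over \<open>x\<close> of the product of the numbers of admissible thresholds. On \<open>C\<^sub>n\<close> that number is a
  function of \<open>(x\<^sub>v\<^sub>-\<^sub>1, x\<^sub>v, x\<^sub>v\<^sub>+\<^sub>1)\<close>, so the sum is the trace of the \<open>n\<close>-th power of a \<open>4 \<times> 4\<close> transfer
  matrix on pairs of adjacent states. Its eigenvalues are \<open>1, 1, 2 \<plusminus> \<surd>5\<close>, and \<open>2 \<plusminus> \<surd>5\<close> are the cubes
  of \<open>(1 \<plusminus> \<surd>5) / 2\<close>, which gives \<open>2 + Luc\<^sub>3\<^sub>n\<close>.\<close>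

section \<open>Fixed points of the increasing threshold map\<close>

lemma incr_vertex_pair_fixed_iff:
  fixes p :: "nat \<times> nat" and \<sigma> :: nat
  assumes "fst p \<in> {0, 1}"
  shows "(if \<sigma> \<ge> snd p then 1 else 0,
          if fst p = 0 \<and> \<sigma> \<ge> snd p then snd p + 1 else snd p) = p
     \<longleftrightarrow> (fst p = 1 \<longleftrightarrow> snd p \<le> \<sigma>)"
  using assms by (cases p; cases "snd p \<le> \<sigma>") auto

lemma ext_states_iff:
  "s \<in> ext_states E V \<longleftrightarrow>
     s \<in> extensional V \<and> (\<forall>v\<in>V. fst (s v) \<in> {0, 1} \<and> snd (s v) \<in> {1..degree E V v + 1})"
  by (auto simp: ext_states_def PiE_iff mem_Times_iff)

lemma Fix_F_up_iff:
  "s \<in> Fix_F_up E V \<longleftrightarrow>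
     s \<in> ext_states E V \<and> (\<forall>v\<in>V. fst (s v) = 1 \<longleftrightarrow> snd (s v) \<le> sigma E V s v)"
proof (cases "s \<in> ext_states E V")
  case True
  then have s: "s \<in> extensional V" "\<And>v. v \<in> V \<Longrightarrow> fst (s v) \<in> {0, 1}"
    by (simp_all add: ext_states_iff)
  have "F_up E V s = s \<longleftrightarrow> (\<forall>v\<in>V. incr_vertex_fun E V s v = s v)"
    using s(1) by (auto simp: F_up_def fun_eq_iff restrict_def extensional_def)
  also have "\<dots> \<longleftrightarrow> (\<forall>v\<in>V. fst (s v) = 1 \<longleftrightarrow> snd (s v) \<le> sigma E V s v)"
  proof (intro ball_cong refl)
    fix v assume "v \<in> V"
    show "incr_vertex_fun E V s v = s v \<longleftrightarrow> (fst (s v) = 1 \<longleftrightarrow> snd (s v) \<le> sigma E V s v)"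
      unfolding incr_vertex_fun_def Let_def
      by (rule incr_vertex_pair_fixed_iff[OF s(2)[OF \<open>v \<in> V\<close>]])
  qed
  finally show ?thesis using True by (simp add: Fix_F_up_def)
qed (simp add: Fix_F_up_def)

definition fixed_thresholds ::
  "('a \<Rightarrow> 'a \<Rightarrow> bool) \<Rightarrow> 'a set \<Rightarrow> ('a \<Rightarrow> nat) \<Rightarrow> 'a \<Rightarrow> nat set" where
  "fixed_thresholds E V x v =
     {k \<in> {1..degree E V v + 1}. x v = 1 \<longleftrightarrow> k \<le> card {u \<in> closed_nbhd E V v. x u = 1}}"

lemma sigma_pair_fun:
  "sigma E V (\<lambda>v\<in>V. (x v, k v)) v = card {u \<in> closed_nbhd E V v. x u = 1}"
  unfolding sigma_def by (rule arg_cong[where f = card]) (auto simp: closed_nbhd_def)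

lemma Fix_F_up_eq_image:
  "Fix_F_up E V = (\<lambda>(x, k). \<lambda>v\<in>V. (x v, k v)) `
     (SIGMA x : \<Pi>\<^sub>E v\<in>V. {0, 1}. \<Pi>\<^sub>E v\<in>V. fixed_thresholds E V x v)"
    (is "_ = ?pair ` ?S")
proof (intro equalityI subsetI)
  fix s assume s: "s \<in> Fix_F_up E V"
  define x where "x = (\<lambda>v\<in>V. fst (s v))"
  define k where "k = (\<lambda>v\<in>V. snd (s v))"
  have ext: "s \<in> ext_states E V"
    and fixed: "\<forall>v\<in>V. fst (s v) = 1 \<longleftrightarrow> snd (s v) \<le> sigma E V s v"
    using s by (simp_all add: Fix_F_up_iff)
  have s_eq: "s = (\<lambda>v\<in>V. (x v, k v))"
    using ext by (simp add: ext_states_iff x_def k_def fun_eq_iff extensional_def)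
  have "x \<in> (\<Pi>\<^sub>E v\<in>V. {0, 1})"
    using ext by (simp add: ext_states_iff x_def)
  moreover have "k \<in> (\<Pi>\<^sub>E v\<in>V. fixed_thresholds E V x v)"
  proof (rule PiE_I)
    fix v assume v: "v \<in> V"
    have "sigma E V s v = card {u \<in> closed_nbhd E V v. x u = 1}"
      by (subst s_eq) (rule sigma_pair_fun)
    moreover have "x v = fst (s v)" "k v = snd (s v)"
      using v by (simp_all add: x_def k_def)
    ultimately show "k v \<in> fixed_thresholds E V x v"
      using ext fixed v by (simp add: ext_states_iff fixed_thresholds_def)
  qed (simp add: k_def)
  ultimately show "s \<in> ?pair ` ?S"
    using s_eq by (intro image_eqI[where x = "(x, k)"]) simp_all
next
  fix s assume "s \<in> ?pair ` ?S"
  then obtain x k where s: "s = (\<lambda>v\<in>V. (x v, k v))" and x: "x \<in> (\<Pi>\<^sub>E v\<in>V. {0, 1})"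
    and k: "k \<in> (\<Pi>\<^sub>E v\<in>V. fixed_thresholds E V x v)" by auto
  then show "s \<in> Fix_F_up E V"
    by (simp add: Fix_F_up_iff ext_states_iff sigma_pair_fun fixed_thresholds_def PiE_iff)
qed

lemma inj_on_pair_fun:
  fixes V :: "'a set"
  shows "inj_on (\<lambda>(x, k). \<lambda>v\<in>V. (x v, k v)) (extensional V \<times> extensional V)"
proof (rule inj_onI, clarify)
  fix x x' :: "'a \<Rightarrow> 'b" and k k' :: "'a \<Rightarrow> 'c"
  assume "x \<in> extensional V" "k \<in> extensional V" "x' \<in> extensional V" "k' \<in> extensional V"
    and eq: "(\<lambda>v\<in>V. (x v, k v)) = (\<lambda>v\<in>V. (x' v, k' v))"
  moreover have "x v = x' v \<and> k v = k' v" if "v \<in> V" for v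
    using fun_cong[OF eq, of v] that by simp
  ultimately show "x = x' \<and> k = k'"
    by (auto intro: extensionalityI)
qed

lemma card_Fix_F_up:
  assumes "finite V"
  shows "card (Fix_F_up E V) =
    (\<Sum>x \<in> (\<Pi>\<^sub>E v\<in>V. {0, 1}). \<Prod>v\<in>V. card (fixed_thresholds E V x v))"
proof -
  let ?S = "SIGMA x : \<Pi>\<^sub>E v\<in>V. {0::nat, 1}. \<Pi>\<^sub>E v\<in>V. fixed_thresholds E V x v"
  have "inj_on (\<lambda>(x, k). \<lambda>v\<in>V. (x v, k v)) ?S"
    by (rule inj_on_subset[OF inj_on_pair_fun]) (auto simp: PiE_def)
  then have "card (Fix_F_up E V) = card ?S"
    by (simp add: Fix_F_up_eq_image card_image)
  also have "\<dots> = (\<Sum>x \<in> (\<Pi>\<^sub>E v\<in>V. {0, 1}). card (\<Pi>\<^sub>E v\<in>V. fixed_thresholds E V x v))"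
    using assms by (intro card_SigmaI) (auto intro!: finite_PiE simp: fixed_thresholds_def)
  finally show ?thesis
    using assms by (simp add: card_PiE)
qed

definition cycle_succ :: "nat \<Rightarrow> nat \<Rightarrow> nat" where
  "cycle_succ n v = Suc v mod n"

definition cycle_pred :: "nat \<Rightarrow> nat \<Rightarrow> nat" where
  "cycle_pred n v = (v + n - 1) mod n"

lemma cycle_succ_less: "0 < n \<Longrightarrow> cycle_succ n v < n"
  by (simp add: cycle_succ_def)

lemma cycle_pred_less: "0 < n \<Longrightarrow> cycle_pred n v < n"
  by (simp add: cycle_pred_def)

lemma cycle_succ_if: "v < n \<Longrightarrow> cycle_succ n v = (if Suc v = n then 0 else Suc v)"
  by (simp add: cycle_succ_def)

lemma cycle_pred_if: "v < n \<Longrightarrow> cycle_pred n v = (if v = 0 then n - 1 else v - 1)"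
  by (cases v) (simp_all add: cycle_pred_def)

lemma cycle_pred_Suc: "cycle_pred n (Suc v) = v mod n"
  by (simp add: cycle_pred_def)

lemma cycle_pred_add_self: "cycle_pred n (v + n) = cycle_pred n v"
proof (cases "n = 0")
  case False
  then have "v + n + n - 1 = (v + n - 1) + n" by simp
  then show ?thesis by (simp add: cycle_pred_def)
qed simp

lemma cycle_succ_eq_iff: "u < n \<Longrightarrow> v < n \<Longrightarrow> cycle_succ n u = v \<longleftrightarrow> u = cycle_pred n v"
  by (auto simp: cycle_succ_if cycle_pred_if)

lemma cycle_adj_iff:
  assumes "v < n"
  shows "cycle_adj n v u \<longleftrightarrow> u < n \<and> (u = cycle_succ n v \<or> u = cycle_pred n v)"
  using assms cycle_succ_eq_iff[of u n v] by (auto simp: cycle_adj_def cycle_succ_def)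

lemma closed_nbhd_cycle:
  assumes "v < n"
  shows "closed_nbhd (cycle_adj n) {0..<n} v = {cycle_pred n v, v, cycle_succ n v}"
  using assms by (auto simp: closed_nbhd_def cycle_adj_iff cycle_succ_if cycle_pred_if)

lemma cycle_neighbours_distinct:
  assumes "n \<ge> 3" "v < n"
  shows "cycle_pred n v \<noteq> v" "cycle_succ n v \<noteq> v" "cycle_pred n v \<noteq> cycle_succ n v"
  using assms by (auto simp: cycle_succ_if cycle_pred_if)

lemma degree_cycle:
  assumes "n \<ge> 3" "v < n"
  shows "degree (cycle_adj n) {0..<n} v = 2"
proof -
  have "{u \<in> {0..<n}. cycle_adj n v u} = {cycle_succ n v, cycle_pred n v}"
    using assms(2) by (auto simp: cycle_adj_iff cycle_succ_if cycle_pred_if)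
  then show ?thesis
    using cycle_neighbours_distinct[OF assms] by (simp add: degree_def)
qed

section \<open>Transfer matrices\<close>

text \<open>\<open>transfer_power B w m a b c d\<close> is the entry \<open>((a, b), (c, d))\<close> of the \<open>m\<close>-th power of the
  transfer matrix on \<open>B \<times> B\<close> whose entry \<open>((a, b), (b, c))\<close> is \<open>w a b c\<close> and whose other entries
  vanish.\<close>

fun transfer_power ::
  "'b set \<Rightarrow> ('b \<Rightarrow> 'b \<Rightarrow> 'b \<Rightarrow> 'c::comm_semiring_1) \<Rightarrow> nat \<Rightarrow>
   'b \<Rightarrow> 'b \<Rightarrow> 'b \<Rightarrow> 'b \<Rightarrow> 'c" where
  "transfer_power B w 0 a b c d = (if a = c \<and> b = d then 1 else 0)"
| "transfer_power B w (Suc m) a b c d = (\<Sum>e\<in>B. transfer_power B w m a b e c * w e c d)"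

definition chain_weight ::
  "('b \<Rightarrow> 'b \<Rightarrow> 'b \<Rightarrow> 'c::comm_monoid_mult) \<Rightarrow> nat \<Rightarrow> (nat \<Rightarrow> 'b) \<Rightarrow> 'c" where
  "chain_weight w m y = (\<Prod>i<m. w (y i) (y (Suc i)) (y (Suc (Suc i))))"

definition chains_with_ends ::
  "'b set \<Rightarrow> nat \<Rightarrow> 'b \<Rightarrow> 'b \<Rightarrow> 'b \<Rightarrow> 'b \<Rightarrow> (nat \<Rightarrow> 'b) set" where
  "chains_with_ends B m a b c d =
     {y \<in> \<Pi>\<^sub>E i\<in>{..Suc m}. B. y 0 = a \<and> y 1 = b \<and> y m = c \<and> y (Suc m) = d}"

lemma finite_chains_with_ends: "finite B \<Longrightarrow> finite (chains_with_ends B m a b c d)"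
  by (simp add: chains_with_ends_def finite_PiE)

lemma chain_weight_cong:
  "(\<And>i. i \<le> Suc m \<Longrightarrow> y i = z i) \<Longrightarrow> chain_weight w m y = chain_weight w m z"
  unfolding chain_weight_def by (intro prod.cong) auto

lemma chains_with_ends_0:
  assumes "c \<in> B" "d \<in> B"
  shows "chains_with_ends B 0 a b c d
       = (if a = c \<and> b = d then {\<lambda>i\<in>{..Suc 0}. if i = 0 then a else b} else {})"
proof (cases "a = c \<and> b = d")
  case True
  let ?r = "\<lambda>i\<in>{..Suc 0}. if i = 0 then a else b"
  have r: "?r \<in> (\<Pi>\<^sub>E i\<in>{..Suc 0}. B)"
    using assms True by (auto simp: restrict_PiE_iff)
  have "y = ?r" if "y \<in> chains_with_ends B 0 a b c d" for y
  proof (rule PiE_ext[OF _ r])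
    show "y \<in> (\<Pi>\<^sub>E i\<in>{..Suc 0}. B)"
      using that by (simp add: chains_with_ends_def)
    show "y i = ?r i" if "i \<in> {..Suc 0}" for i
      using that \<open>y \<in> chains_with_ends B 0 a b c d\<close>
      by (cases i) (simp_all add: chains_with_ends_def)
  qed
  moreover have "?r \<in> chains_with_ends B 0 a b c d"
    using r True by (simp add: chains_with_ends_def)
  ultimately have "chains_with_ends B 0 a b c d = {?r}"
    by blast
  with True show ?thesis
    by simp
qed (auto simp: chains_with_ends_def)

lemma chains_with_ends_Suc_eq_image:
  assumes "d \<in> B"
  shows "{y \<in> chains_with_ends B (Suc m) a b c d. y m = e}
       = (\<lambda>z. z(Suc (Suc m) := d)) ` chains_with_ends B m a b e c"
proof (intro equalityI subsetI)
  fix y assume y: "y \<in> {y \<in> chains_with_ends B (Suc m) a b c d. y m = e}"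
  then have y_PiE: "y \<in> (\<Pi>\<^sub>E i\<in>{..Suc (Suc m)}. B)"
    by (simp add: chains_with_ends_def)
  have "y = (restrict y {..Suc m})(Suc (Suc m) := d)"
  proof
    fix i show "y i = ((restrict y {..Suc m})(Suc (Suc m) := d)) i"
      using y PiE_arb[OF y_PiE, of i] by (auto simp: chains_with_ends_def le_Suc_eq)
  qed
  moreover have "restrict y {..Suc m} \<in> chains_with_ends B m a b e c"
    using y by (auto simp: chains_with_ends_def)
  ultimately show "y \<in> (\<lambda>z. z(Suc (Suc m) := d)) ` chains_with_ends B m a b e c"
    by blast
next
  fix y assume "y \<in> (\<lambda>z. z(Suc (Suc m) := d)) ` chains_with_ends B m a b e c"
  then obtain z where y: "y = z(Suc (Suc m) := d)" and z: "z \<in> chains_with_ends B m a b e c"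
    by blast
  have "y \<in> (\<Pi>\<^sub>E i\<in>{..Suc (Suc m)}. B)"
    using z assms unfolding y chains_with_ends_def
    by (auto simp: PiE_iff extensional_def)
  then show "y \<in> {y \<in> chains_with_ends B (Suc m) a b c d. y m = e}"
    using z by (simp add: y chains_with_ends_def)
qed

lemma inj_on_chain_extension:
  "inj_on (\<lambda>z. z(Suc (Suc m) := d)) (chains_with_ends B m a b e c)"
proof (rule inj_onI)
  fix z z' assume z: "z \<in> chains_with_ends B m a b e c" "z' \<in> chains_with_ends B m a b e c"
    and eq: "z(Suc (Suc m) := d) = z'(Suc (Suc m) := d)"
  show "z = z'"
  proof (rule PiE_ext)
    show "z \<in> (\<Pi>\<^sub>E i\<in>{..Suc m}. B)" "z' \<in> (\<Pi>\<^sub>E i\<in>{..Suc m}. B)"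
      using z by (simp_all add: chains_with_ends_def)
    show "z i = z' i" if "i \<in> {..Suc m}" for i
      using fun_cong[OF eq, of i] that by simp
  qed
qed

lemma sum_chains_with_ends_eq_transfer_power:
  assumes "finite B" "c \<in> B" "d \<in> B"
  shows "(\<Sum>y\<in>chains_with_ends B m a b c d. chain_weight w m y)
       = transfer_power B w m a b c d"
  using assms(2,3)
proof (induction m arbitrary: c d)
  case 0
  then show ?case by (simp add: chains_with_ends_0 chain_weight_def)
next
  case (Suc m)
  let ?ext = "\<lambda>z. z(Suc (Suc m) := d)"
  have "(\<Sum>y\<in>chains_with_ends B (Suc m) a b c d. chain_weight w (Suc m) y)
      = (\<Sum>e\<in>B. \<Sum>y\<in>{y \<in> chains_with_ends B (Suc m) a b c d. y m = e}.
           chain_weight w (Suc m) y)"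
    using assms(1)
    by (intro sum.group[symmetric] finite_chains_with_ends) (auto simp: chains_with_ends_def)
  also have "\<dots> = (\<Sum>e\<in>B. \<Sum>z\<in>chains_with_ends B m a b e c. chain_weight w (Suc m) (?ext z))"
    using Suc.prems
    by (simp add: chains_with_ends_Suc_eq_image sum.reindex inj_on_chain_extension)
  also have "\<dots> = (\<Sum>e\<in>B. \<Sum>z\<in>chains_with_ends B m a b e c. chain_weight w m z * w e c d)"
  proof (intro sum.cong refl)
    fix e z assume "z \<in> chains_with_ends B m a b e c"
    moreover have "chain_weight w m (?ext z) = chain_weight w m z"
      by (rule chain_weight_cong) simp
    ultimately show "chain_weight w (Suc m) (?ext z) = chain_weight w m z * w e c d"
      using Suc.prems by (simp add: chain_weight_def chains_with_ends_def)
  qed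
  also have "\<dots> = (\<Sum>e\<in>B. transfer_power B w m a b e c * w e c d)"
    using Suc by (simp add: sum_distrib_right[symmetric])
  also have "\<dots> = transfer_power B w (Suc m) a b c d"
    by simp
  finally show ?case .
qed

lemma sum_cycle_eq_trace_transfer_power:
  assumes "finite B" "n > 0"
  shows "(\<Sum>x\<in>(\<Pi>\<^sub>E v\<in>{0..<n}. B).
          \<Prod>v\<in>{0..<n}. w (x (cycle_pred n v)) (x v) (x (cycle_succ n v)))
       = (\<Sum>a\<in>B. \<Sum>b\<in>B. transfer_power B w n a b a b)"
proof -
  let ?closed = "{y \<in> \<Pi>\<^sub>E i\<in>{..Suc n}. B. y 0 = y n \<and> y 1 = y (Suc n)}"
  note pred_lt = cycle_pred_less[OF assms(2)]
  txt \<open>Unroll the cycle into the closed chain \<open>x\<^sub>n\<^sub>-\<^sub>1, x\<^sub>0, \<dots>, x\<^sub>n\<^sub>-\<^sub>1, x\<^sub>0\<close>.\<close>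
  have "(\<Sum>x\<in>(\<Pi>\<^sub>E v\<in>{0..<n}. B).
          \<Prod>v\<in>{0..<n}. w (x (cycle_pred n v)) (x v) (x (cycle_succ n v)))
      = (\<Sum>y\<in>?closed. chain_weight w n y)"
  proof (rule sum.reindex_bij_witness[where j = "\<lambda>x. \<lambda>i\<in>{..Suc n}. x (cycle_pred n i)"
                                        and i = "\<lambda>y. \<lambda>v\<in>{0..<n}. y (Suc v)"])
    fix x assume x: "x \<in> (\<Pi>\<^sub>E v\<in>{0..<n}. B)"
    show "(\<lambda>v\<in>{0..<n}. (\<lambda>i\<in>{..Suc n}. x (cycle_pred n i)) (Suc v)) = x"
    proof
      fix v show "(\<lambda>v\<in>{0..<n}. (\<lambda>i\<in>{..Suc n}. x (cycle_pred n i)) (Suc v)) v = x v"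
        using PiE_arb[OF x, of v] by (simp add: cycle_pred_Suc)
    qed
    have "(\<lambda>i\<in>{..Suc n}. x (cycle_pred n i)) \<in> (\<Pi>\<^sub>E i\<in>{..Suc n}. B)"
      using pred_lt by (auto simp: restrict_PiE_iff intro!: PiE_mem[OF x])
    moreover have "cycle_pred n n = cycle_pred n 0" "cycle_pred n (Suc n) = cycle_pred n 1"
      using cycle_pred_add_self[of n 0] cycle_pred_add_self[of n 1] by simp_all
    ultimately show "(\<lambda>i\<in>{..Suc n}. x (cycle_pred n i)) \<in> ?closed"
      by simp
    show "chain_weight w n (\<lambda>i\<in>{..Suc n}. x (cycle_pred n i))
        = (\<Prod>v\<in>{0..<n}. w (x (cycle_pred n v)) (x v) (x (cycle_succ n v)))"
      unfolding chain_weight_def atLeast0LessThan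
      by (intro prod.cong refl) (simp add: cycle_pred_Suc cycle_succ_def)
  next
    fix y assume y: "y \<in> ?closed"
    show "(\<lambda>v\<in>{0..<n}. y (Suc v)) \<in> (\<Pi>\<^sub>E v\<in>{0..<n}. B)"
      using y by (auto simp: restrict_PiE_iff intro!: PiE_mem[of y "{..Suc n}"])
    show "(\<lambda>i\<in>{..Suc n}. (\<lambda>v\<in>{0..<n}. y (Suc v)) (cycle_pred n i)) = y"
    proof
      fix i
      have "y (Suc (cycle_pred n i)) = y i" if i: "i \<le> Suc n"
      proof -
        consider "i = 0" | "0 < i" "i \<le> n" | "i = Suc n"
          using i by linarith
        then show ?thesis
        proof cases
          case 1
          then show ?thesis using y assms(2) by (simp add: cycle_pred_def)
        next
          case 2
          then obtain j where "i = Suc j" "j < n" by (cases i) auto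
          then show ?thesis by (simp add: cycle_pred_Suc)
        next
          case 3
          then show ?thesis using y by (simp add: cycle_pred_Suc)
        qed
      qed
      then show "(\<lambda>i\<in>{..Suc n}. (\<lambda>v\<in>{0..<n}. y (Suc v)) (cycle_pred n i)) i = y i"
        using y pred_lt PiE_arb[of y "{..Suc n}" "\<lambda>_. B" i] by simp
    qed
  qed
  also have "\<dots> = (\<Sum>p\<in>B \<times> B. \<Sum>y\<in>{y \<in> ?closed. (y 0, y 1) = p}. chain_weight w n y)"
  proof (rule sum.group[symmetric])
    show "finite ?closed"
      using assms(1) by (simp add: finite_PiE)
    show "(\<lambda>y. (y 0, y 1)) ` ?closed \<subseteq> B \<times> B"
      by (auto simp: PiE_mem)
  qed (use assms(1) in simp)
  also have "\<dots> = (\<Sum>(a, b)\<in>B \<times> B. \<Sum>y\<in>chains_with_ends B n a b a b. chain_weight w n y)"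
  proof -
    have "{y \<in> ?closed. (y 0, y 1) = (a, b)} = chains_with_ends B n a b a b" for a b
      by (auto simp: chains_with_ends_def)
    then show ?thesis
      by (intro sum.cong refl) auto
  qed
  also have "\<dots> = (\<Sum>a\<in>B. \<Sum>b\<in>B. transfer_power B w n a b a b)"
    using assms(1)
    by (simp add: sum.cartesian_product[symmetric] sum_chains_with_ends_eq_transfer_power)
  finally show ?thesis .
qed

lemma transfer_power_numeral:
  "transfer_power B w (numeral k) a b c d
     = (\<Sum>e\<in>B. transfer_power B w (pred_numeral k) a b e c * w e c d)"
  by (simp add: numeral_eq_Suc)

lemma transfer_power_1:
  "transfer_power B w 1 a b c d = (\<Sum>e\<in>B. transfer_power B w 0 a b e c * w e c d)"
  by simp

section \<open>Lucas numbers\<close>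

lemma lucas_add_6: "lucas (k + 6) = 4 * lucas (k + 3) + lucas k"
  by (simp add: numeral_eq_Suc)

lemma power_Suc_Suc_of_square_eq:
  fixes x :: "'a::comm_ring_1"
  assumes "x ^ 2 = x + 1"
  shows "x ^ Suc (Suc m) = x ^ Suc m + x ^ m"
proof -
  have "x ^ Suc (Suc m) = x ^ m * x ^ 2"
    by (simp add: power2_eq_square algebra_simps)
  also have "\<dots> = x ^ Suc m + x ^ m"
    by (simp add: assms algebra_simps)
  finally show ?thesis .
qed

lemma golden_square: "((1 + sqrt 5) / 2) ^ 2 = (1 + sqrt 5) / 2 + 1"
  and golden_conj_square: "((1 - sqrt 5) / 2) ^ 2 = (1 - sqrt 5) / 2 + 1"
  by (simp_all add: power2_eq_square field_simps)

lemma lucas_closed_form: "real (lucas m) = ((1 + sqrt 5) / 2) ^ m + ((1 - sqrt 5) / 2) ^ m"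
proof (induction m rule: lucas.induct)
  case (3 m)
  then show ?case
    by (simp add: power_Suc_Suc_of_square_eq[OF golden_square]
        power_Suc_Suc_of_square_eq[OF golden_conj_square] del: power_Suc)
qed (simp_all add: field_simps)

lemma lucas_triple_closed_form: "real (lucas (3 * n)) = (2 + sqrt 5) ^ n + (2 - sqrt 5) ^ n"
proof -
  have "((1 + sqrt 5) / 2) ^ 3 = 2 + sqrt 5" "((1 - sqrt 5) / 2) ^ 3 = 2 - sqrt 5"
    using power_Suc_Suc_of_square_eq[OF golden_square, of 1]
      power_Suc_Suc_of_square_eq[OF golden_conj_square, of 1]
    by (simp_all add: numeral_3_eq_3 golden_square golden_conj_square field_simps)
  then show ?thesis
    by (simp add: lucas_closed_form power_mult)
qed

lemma card_eq_sum_binary: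
  assumes "finite A" "\<And>u. u \<in> A \<Longrightarrow> x u \<in> {0, 1}"
  shows "card {u \<in> A. x u = (1::nat)} = sum x A"
proof -
  have "sum x A = (\<Sum>u\<in>A. if x u = 1 then 1 else 0)"
    using assms(2) by (intro sum.cong) auto
  then show ?thesis
    using assms(1) by (simp add: sum.If_cases Int_def)
qed

definition cycle_weight :: "nat \<Rightarrow> nat \<Rightarrow> nat \<Rightarrow> nat" where
  "cycle_weight a b c = (if b = 1 then 1 + a + c else 3 - (a + c))"

lemma card_fixed_thresholds_cycle:
  assumes "n \<ge> 3" "v < n" "x \<in> (\<Pi>\<^sub>E v\<in>{0..<n}. {0, 1})"
  shows "card (fixed_thresholds (cycle_adj n) {0..<n} x v)
       = cycle_weight (x (cycle_pred n v)) (x v) (x (cycle_succ n v))"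
proof -
  let ?\<sigma> = "x (cycle_pred n v) + x v + x (cycle_succ n v)"
  have binary: "x u \<in> {0, 1}" if "u < n" for u
    using assms(3) that by auto
  have "card {u \<in> closed_nbhd (cycle_adj n) {0..<n} v. x u = 1}
      = sum x {cycle_pred n v, v, cycle_succ n v}"
    unfolding closed_nbhd_cycle[OF assms(2)]
    using assms(2)
    by (intro card_eq_sum_binary binary) (auto intro: cycle_pred_less cycle_succ_less)
  also have "\<dots> = ?\<sigma>"
    using cycle_neighbours_distinct[OF assms(1,2)] by simp
  finally have "card {u \<in> closed_nbhd (cycle_adj n) {0..<n} v. x u = 1} = ?\<sigma>" .
  then have thresholds:
    "fixed_thresholds (cycle_adj n) {0..<n} x v = {k \<in> {1..3}. x v = 1 \<longleftrightarrow> k \<le> ?\<sigma>}"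
    using degree_cycle[OF assms(1,2)] by (simp add: fixed_thresholds_def)
  show ?thesis
  proof (cases "x v = 1")
    case True
    have "cycle_pred n v < n" "cycle_succ n v < n"
      using assms(2) by (simp_all add: cycle_pred_less cycle_succ_less)
    then have "?\<sigma> \<le> 3"
      using binary[of "cycle_pred n v"] binary[of "cycle_succ n v"] True by auto
    then have "{k \<in> {1..3}. k \<le> ?\<sigma>} = {1..?\<sigma>}" by auto
    then show ?thesis using True by (simp add: thresholds cycle_weight_def)
  next
    case False
    with binary[OF assms(2)] have "x v = 0" by simp
    moreover have "{k \<in> {1..3}. \<not> k \<le> ?\<sigma>} = {Suc ?\<sigma>..3}" by auto
    ultimately show ?thesis by (simp add: thresholds cycle_weight_def)
  qed
qed

text \<open>The transfer matrix of \<open>cycle_weight\<close> has characteristic polynomial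
  \<open>(x - 1)\<^sup>2 (x\<^sup>2 - 4 x - 1) = x\<^sup>4 - 6 x\<^sup>3 + 8 x\<^sup>2 - 2 x - 1\<close>, so by Cayley--Hamilton all entries of
  its powers satisfy the corresponding linear recurrence (written without subtraction).\<close>

lemma transfer_power_cycle_weight_recurrence:
  assumes "a \<in> {0, 1}" "b \<in> {0, 1}" "c \<in> {0, 1}" "d \<in> {0, 1}"
  shows "transfer_power {0, 1} cycle_weight (m + 4) a b c d
           + 8 * transfer_power {0, 1} cycle_weight (m + 2) a b c d
       = 6 * transfer_power {0, 1} cycle_weight (m + 3) a b c d
           + 2 * transfer_power {0, 1} cycle_weight (m + 1) a b c d
           + transfer_power {0, 1} cycle_weight m a b c d"
  using assms(3,4)
proof (induction m arbitrary: c d)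
  case 0
  have "a = 0 \<or> a = 1" "b = 0 \<or> b = 1" "c = 0 \<or> c = 1" "d = 0 \<or> d = 1"
    using 0 assms(1,2) by auto
  then show ?case
    by (elim disjE) (simp_all add: transfer_power_numeral transfer_power_1 cycle_weight_def)
next
  case (Suc m)
  let ?T = "transfer_power {0, 1} cycle_weight"
  have shift:
    "?T (Suc m + j) a b c d = (\<Sum>e\<in>{0, 1}. ?T (m + j) a b e c * cycle_weight e c d)" for j
    by simp
  have "?T (Suc m + 4) a b c d + 8 * ?T (Suc m + 2) a b c d
      = (\<Sum>e\<in>{0, 1}. (?T (m + 4) a b e c + 8 * ?T (m + 2) a b e c) * cycle_weight e c d)"
    by (simp only: shift) (simp add: sum.distrib sum_distrib_left algebra_simps)
  also have "\<dots> = (\<Sum>e\<in>{0, 1}.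
      (6 * ?T (m + 3) a b e c + 2 * ?T (m + 1) a b e c + ?T m a b e c) * cycle_weight e c d)"
    using Suc by (intro sum.cong refl) auto
  also have "\<dots> = 6 * ?T (Suc m + 3) a b c d + 2 * ?T (Suc m + 1) a b c d + ?T (Suc m + 0) a b c d"
    by (simp only: shift) (simp add: sum.distrib sum_distrib_left algebra_simps)
  finally show ?case by simp
qed

lemma trace_transfer_power_cycle_weight:
  "(\<Sum>a\<in>{0, 1}. \<Sum>b\<in>{0, 1}. transfer_power {0, 1} cycle_weight m a b a b)
     = 2 + lucas (3 * m)"
proof (induction m rule: less_induct)
  case (less m)
  let ?tr = "\<lambda>m. \<Sum>a\<in>{0, 1}. \<Sum>b\<in>{0, 1::nat}. transfer_power {0, 1} cycle_weight m a b a b"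
  show ?case
  proof (cases "m < 4")
    case True
    have lucas_values: "lucas 3 = 4" "lucas 6 = 18" "lucas 9 = 76"
      by (simp_all add: eval_nat_numeral)
    consider "m = 0" | "m = 1" | "m = 2" | "m = 3"
      using True by linarith
    then show ?thesis
      by cases
        (simp_all add: transfer_power_numeral transfer_power_1 cycle_weight_def lucas_values)
  next
    case False
    then obtain k where m: "m = k + 4"
      by (metis add.commute le_Suc_ex not_less)
    let ?T = "transfer_power {0, 1} cycle_weight"
    have "?tr (k + 4) + 8 * ?tr (k + 2)
        = (\<Sum>a\<in>{0, 1}. \<Sum>b\<in>{0, 1}. ?T (k + 4) a b a b + 8 * ?T (k + 2) a b a b)"
      by (simp only: sum.distrib sum_distrib_left)
    also have "\<dots> = (\<Sum>a\<in>{0, 1}. \<Sum>b\<in>{0, 1}.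
        6 * ?T (k + 3) a b a b + 2 * ?T (k + 1) a b a b + ?T k a b a b)"
      by (intro sum.cong refl transfer_power_cycle_weight_recurrence) auto
    also have "\<dots> = 6 * ?tr (k + 3) + 2 * ?tr (k + 1) + ?tr k"
      by (simp only: sum.distrib sum_distrib_left)
    finally have recurrence:
      "?tr (k + 4) + 8 * ?tr (k + 2) = 6 * ?tr (k + 3) + 2 * ?tr (k + 1) + ?tr k" .
    have IH: "?tr (k + j) = 2 + lucas (3 * k + 3 * j)" if "j < 4" for j
      using less[of "k + j"] that m by (simp add: distrib_left del: transfer_power.simps(2))
    have "lucas (3 * k + 12) = 4 * lucas (3 * k + 9) + lucas (3 * k + 6)"
      "lucas (3 * k + 9) = 4 * lucas (3 * k + 6) + lucas (3 * k + 3)"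
      "lucas (3 * k + 6) = 4 * lucas (3 * k + 3) + lucas (3 * k)"
      using lucas_add_6[of "3 * k + 6"] lucas_add_6[of "3 * k + 3"] lucas_add_6[of "3 * k"]
      by (simp_all add: algebra_simps)
    then show ?thesis
      using recurrence IH[of 0] IH[of 1] IH[of 2] IH[of 3] unfolding m
      by (simp add: distrib_left del: transfer_power.simps(2))
  qed
qed

theorem proposition4p4:
  fixes n :: nat
  assumes "n \<ge> 3"
  shows "card (Fix_F_up (cycle_adj n) {0..<n}) = 2 + lucas (3 * n)
       \<and> real (card (Fix_F_up (cycle_adj n) {0..<n})) = 2 + (2 + sqrt 5) ^ n + (2 - sqrt 5) ^ n"
proof -
  have "card (Fix_F_up (cycle_adj n) {0..<n})
      = (\<Sum>x\<in>(\<Pi>\<^sub>E v\<in>{0..<n}. {0, 1}). \<Prod>v\<in>{0..<n}.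
           cycle_weight (x (cycle_pred n v)) (x v) (x (cycle_succ n v)))"
    unfolding card_Fix_F_up[OF finite_atLeastLessThan]
    using assms by (intro sum.cong prod.cong refl card_fixed_thresholds_cycle) auto
  also have "\<dots> = (\<Sum>a\<in>{0, 1}. \<Sum>b\<in>{0, 1}. transfer_power {0, 1} cycle_weight n a b a b)"
    using assms by (intro sum_cycle_eq_trace_transfer_power) auto
  also have "\<dots> = 2 + lucas (3 * n)"
    by (rule trace_transfer_power_cycle_weight)
  finally show ?thesis
    by (simp add: lucas_triple_closed_form)
qed

end
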